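(* Let $H$ be the real vector space of Hermitian matrices on a finite-dimensional system with inner product $\langle A,B\rangle=\mathrm{Tr}(AB)$. Let $\mathcal{K}\subset H$ be a proper convex cone (closed, convex, pointed, with nonempty interior) and $\mathcal{F}\subset H$ a compact set such that $\{\lambda Z:0\le\lambda\le1,\ Z\in\mathcal{F}\}$ is convex and $\mathcal{F}\cap\mathrm{int}(\mathcal{K})\neq\emptyset$. Define $R^{\mathcal{F}}_{\mathcal{K}}(\mathcal{E}):=\inf\{\lambda\in\mathbb{R}_+:\ (\mathcal{E}+\lambda\mathcal{E}')/(1+\lambda)\in\mathcal{F},\ \mathcal{E}'\in\mathcal{K}\}$ and $\mathcal{N}:=\{\mathcal{E}\in H:\ \delta Z-\mathcal{E}\notin\mathcal{K}\ \ \forall\delta<1,\ Z\in\mathcal{F}\}$. Let $\mathcal{X}\subseteq H$ be any set with $\{\lambda\varphi:\lambda\in\mathbb{R}_+,\ \varphi\in\mathcal{X}\}=\mathcal{K}^*$. If $\mathcal{E}\in\mathcal{N}$, then $$\max_{\varphi\in\mathcal{X}\setminus\{0\}}\frac{\langle\varphi,\mathcal{E}\rangle}{\max_{Z\in\mathcal{F}}\langle\varphi,Z\rangle}=1+R^{\mathcal{F}}_{\mathcal{K}}(\mathcal{E}).$$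
   Context: $\mathcal{K}^*:=\{\varphi\in H:\langle\varphi,x\rangle\ge0\ \forall x\in\mathcal{K}\}$ is the dual cone; $\mathrm{int}$ denotes interior; $\mathbb{R}_+$ the nonnegative reals. *)

theory Defs
  imports "HOL-Analysis.Analysis"
begin

definition hermitian :: "complex^'n^'n \<Rightarrow> bool" where
  "hermitian A \<longleftrightarrow> (\<forall>i j. A $ i $ j = cnj (A $ j $ i))"

definition herm_set :: "(complex^'n^'n) set" where
  "herm_set = {A. hermitian A}"

text \<open>Hilbert-Schmidt inner product <A,B> = Tr(AB) (real for Hermitian A, B).\<close>
definition hs_inner :: "complex^'n^'n \<Rightarrow> complex^'n^'n \<Rightarrow> real" where
  "hs_inner A B = Re (trace (A ** B))"

definition herm_interior :: "(complex^'n^'n) set \<Rightarrow> (complex^'n^'n) set" where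
  "herm_interior S = {x \<in> S. \<exists>e>0. \<forall>y \<in> herm_set. dist y x < e \<longrightarrow> y \<in> S}"

definition proper_cone :: "(complex^'n^'n) set \<Rightarrow> bool" where
  "proper_cone K \<longleftrightarrow> K \<subseteq> herm_set \<and> cone K \<and> convex K \<and> closed K
     \<and> (\<forall>x. x \<in> K \<and> - x \<in> K \<longrightarrow> x = 0) \<and> herm_interior K \<noteq> {}"

definition dual_cone :: "(complex^'n^'n) set \<Rightarrow> (complex^'n^'n) set" where
  "dual_cone K = {\<phi> \<in> herm_set. \<forall>x \<in> K. hs_inner \<phi> x \<ge> 0}"

definition robustness :: "(complex^'n^'n) set \<Rightarrow> (complex^'n^'n) set \<Rightarrow> complex^'n^'n \<Rightarrow> real" where
  "robustness F K E = Inf {t. (t::real) \<ge> 0 \<and>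
      (\<exists>E' \<in> K. (1 / (1 + t)) *\<^sub>R (E + t *\<^sub>R E') \<in> F)}"

definition N_set :: "(complex^'n^'n) set \<Rightarrow> (complex^'n^'n) set \<Rightarrow> (complex^'n^'n) set" where
  "N_set F K = {E \<in> herm_set. \<forall>d::real. \<forall>Z \<in> F. d < 1 \<longrightarrow> d *\<^sub>R Z - E \<notin> K}"

end

theory Submission
  imports Defs
begin

(*
  Every nonzero phi in K* is strictly positive at the point of F in the interior of K, so
  max_F <phi,.> > 0; and writing E = (1 + t) Z - t E' with Z in F, E' in K bounds
  <phi,E> by (1 + t) max_F <phi,.>, which gives the inequality "<=".

  For the reverse inequality put rho = 1 + R and S = rho [0,1]F - K. Letting t decrease
  to R shows that E lies in the closure of S. It does not lie in the relative interior:
  otherwise mu E is in S for some mu > 1, i.e. E is dominated by (rho / mu) g with g in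
  [0,1]F. But if E is dominated by l g, then mixing g with the interior point of F moves
  the domination into the interior of K, where the defining property of N leaves strict
  slack; this yields a feasible t close to l - 1, so R <= l - 1. A supporting hyperplane
  of S at E, taken inside the space of Hermitian matrices, is then a nonzero element of K*
  attaining rho, and a positive rescaling of it lies in X.
*)

lemma subspace_herm_set: "subspace herm_set"
proof -
  have add: "hermitian (x + y)" if "hermitian x" "hermitian y" for x y :: "complex^'n^'n"
    using that unfolding hermitian_def by (metis complex_cnj_add vector_add_component)
  have scale: "hermitian (c *\<^sub>R x)" if "hermitian x" for c and x :: "complex^'n^'n"
    using that unfolding hermitian_def by (metis complex_cnj_scaleR vector_scaleR_component)
  have "hermitian 0"
    by (simp add: hermitian_def)
  then show ?thesis
    using add scale unfolding subspace_def herm_set_def by blast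
qed

lemma hs_inner_eq_inner:
  assumes "B \<in> herm_set"
  shows "hs_inner A B = A \<bullet> B"
proof -
  \<comment> \<open>Stated inside the product: the bare rule B $ k $ i = cnj (B $ i $ k) makes the simplifier loop.\<close>
  have B: "A $ i $ k * B $ k $ i = A $ i $ k * cnj (B $ i $ k)" for i k
  proof -
    have "hermitian B"
      using assms by (simp add: herm_set_def)
    then have "B $ k $ i = cnj (B $ i $ k)"
      unfolding hermitian_def by blast
    then show ?thesis
      by simp
  qed
  have "hs_inner A B = Re (\<Sum>i\<in>UNIV. \<Sum>k\<in>UNIV. A $ i $ k * B $ k $ i)"
    by (simp add: hs_inner_def trace_def matrix_matrix_mult_def)
  also have "\<dots> = Re (\<Sum>i\<in>UNIV. \<Sum>k\<in>UNIV. A $ i $ k * cnj (B $ i $ k))"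
    by (simp only: B)
  also have "\<dots> = A \<bullet> B"
    by (simp add: inner_vec_def inner_complex_def)
  finally show ?thesis .
qed

lemma herm_interior_subset: "herm_interior K \<subseteq> K"
  by (auto simp: herm_interior_def)

lemma herm_interior_add_scaled:
  assumes "x \<in> herm_interior K" "x \<in> herm_set" "v \<in> herm_set"
  obtains d where "d > 0" "x + d *\<^sub>R v \<in> K"
proof -
  obtain e where "e > 0" and ball: "\<And>y. y \<in> herm_set \<Longrightarrow> dist y x < e \<Longrightarrow> y \<in> K"
    using assms(1) unfolding herm_interior_def by blast
  define d where "d = e / (norm v + 1)"
  have pos: "norm v + 1 > 0"
    by (intro add_nonneg_pos) simp_all
  have "d > 0"
    unfolding d_def using \<open>e > 0\<close> pos by (rule divide_pos_pos)
  moreover have "dist (x + d *\<^sub>R v) x < e"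
  proof -
    have "d * norm v < d * (norm v + 1)"
      using \<open>d > 0\<close> by simp
    also have "\<dots> = e"
      unfolding d_def using pos by simp
    finally show ?thesis
      using \<open>d > 0\<close> by (simp add: dist_norm)
  qed
  moreover have "x + d *\<^sub>R v \<in> herm_set"
    using assms(2,3) subspace_herm_set by (meson subspace_add subspace_scale)
  ultimately show thesis
    using that ball by blast
qed

lemma herm_interior_add:
  assumes "K \<subseteq> herm_set" "cone K" "convex K"
    and "k \<in> K" "x \<in> herm_interior K" "\<alpha> > 0"
  shows "k + \<alpha> *\<^sub>R x \<in> herm_interior K"
proof -
  obtain e where "e > 0" and ball: "\<And>y. y \<in> herm_set \<Longrightarrow> dist y x < e \<Longrightarrow> y \<in> K"
    using assms(5) unfolding herm_interior_def by blast
  have "(\<forall>u\<in>K. \<forall>w\<in>K. u + w \<in> K) \<and> (\<forall>w\<in>K. \<forall>c\<ge>0. c *\<^sub>R w \<in> K)"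
    using assms(2,3) by (subst convex_cone[symmetric]) simp
  then have K_add: "u + c *\<^sub>R w \<in> K" if "u \<in> K" "w \<in> K" "c \<ge> 0" for u w c
    using that by blast
  have "y \<in> K" if "y \<in> herm_set" "dist y (k + \<alpha> *\<^sub>R x) < \<alpha> * e" for y
  proof -
    define w where "w = (1 / \<alpha>) *\<^sub>R (y - k)"
    have "w \<in> herm_set"
      unfolding w_def using that(1) assms(1,4) subspace_herm_set
      by (meson subsetD subspace_diff subspace_scale)
    moreover have "dist w x = dist y (k + \<alpha> *\<^sub>R x) / \<alpha>"
    proof -
      have "w - x = (1 / \<alpha>) *\<^sub>R (y - (k + \<alpha> *\<^sub>R x))"
        using \<open>\<alpha> > 0\<close> by (simp add: w_def algebra_simps)
      then show ?thesis
        using \<open>\<alpha> > 0\<close> by (simp add: dist_norm)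
    qed
    ultimately have "w \<in> K"
      using that(2) \<open>\<alpha> > 0\<close> ball by (simp add: divide_less_eq mult.commute)
    moreover have "y = k + \<alpha> *\<^sub>R w"
      using \<open>\<alpha> > 0\<close> by (simp add: w_def)
    ultimately show ?thesis
      using K_add[of k w \<alpha>] assms(4,6) by simp
  qed
  moreover have "k + \<alpha> *\<^sub>R x \<in> K"
    using K_add assms(4,5,6) herm_interior_subset by (meson less_imp_le subsetD)
  moreover have "\<alpha> * e > 0"
    using \<open>e > 0\<close> \<open>\<alpha> > 0\<close> by simp
  ultimately show ?thesis
    unfolding herm_interior_def by blast
qed

lemma dual_cone_inner_pos:
  assumes "K \<subseteq> herm_set" "\<phi> \<in> dual_cone K" "\<phi> \<noteq> 0" "x \<in> herm_interior K"
  shows "0 < hs_inner \<phi> x"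
proof -
  have x: "x \<in> herm_set"
    using assms(1,4) herm_interior_subset by blast
  have "- \<phi> \<in> herm_set"
    using assms(2) subspace_herm_set subspace_neg by (auto simp: dual_cone_def)
  then obtain d where "d > 0" and "x + d *\<^sub>R (- \<phi>) \<in> K"
    using herm_interior_add_scaled[OF assms(4) x] by blast
  then have xd: "x - d *\<^sub>R \<phi> \<in> K"
    by simp
  then have "0 \<le> hs_inner \<phi> (x - d *\<^sub>R \<phi>)"
    using assms(2) by (simp add: dual_cone_def)
  also have "\<dots> = \<phi> \<bullet> x - d * (\<phi> \<bullet> \<phi>)"
    using assms(1) xd by (simp add: subsetD hs_inner_eq_inner inner_diff_right)
  finally have "d * (\<phi> \<bullet> \<phi>) \<le> \<phi> \<bullet> x"
    by simp
  moreover have "0 < d * (\<phi> \<bullet> \<phi>)"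
    using \<open>d > 0\<close> assms(3) by simp
  ultimately show ?thesis
    using x by (simp add: hs_inner_eq_inner)
qed

lemma supporting_functional_in_subspace:
  fixes S :: "'a::euclidean_space set"
  assumes "subspace H" "S \<subseteq> H" "convex S" "S \<noteq> {}"
    and "z \<in> closure S" "z \<notin> rel_interior S"
  obtains a where "a \<in> H" "a \<noteq> 0" "\<And>y. y \<in> S \<Longrightarrow> a \<bullet> y \<le> a \<bullet> z"
proof -
  obtain b where b_le: "\<And>y. y \<in> closure S \<Longrightarrow> b \<bullet> z \<le> b \<bullet> y"
    and b_less: "\<And>y. y \<in> rel_interior S \<Longrightarrow> b \<bullet> z < b \<bullet> y"
    using supporting_hyperplane_relative_frontier[OF assms(3,5,6)] by metis
  have "span H = H"
    using assms(1) by (rule span_eq_iff[THEN iffD2])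
  then obtain p q where "p \<in> H" and q: "\<And>w. w \<in> H \<Longrightarrow> orthogonal q w" and b: "b = p + q"
    using orthogonal_subspace_decomp_exists[of H b] by metis
  have b_p: "b \<bullet> y = p \<bullet> y" if "y \<in> H" for y
    using q[OF that] by (simp add: b inner_add_left orthogonal_def)
  have "closure S \<subseteq> H"
    using assms(1,2) closed_subspace closure_minimal by blast
  then have "z \<in> H"
    using assms(5) by blast
  obtain y0 where "y0 \<in> rel_interior S"
    using assms(3,4) rel_interior_eq_empty by blast
  then have "p \<bullet> z < p \<bullet> y0"
    using b_less b_p \<open>z \<in> H\<close> assms(2) rel_interior_subset by (metis subsetD)
  then have "- p \<noteq> 0"
    by auto
  moreover have "- p \<bullet> y \<le> - p \<bullet> z" if "y \<in> S" for y
    using b_le[OF closure_subset[THEN subsetD, OF that]] b_p \<open>z \<in> H\<close> assms(2) that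
    by (metis inner_minus_left neg_le_iff_le subsetD)
  ultimately show thesis
    using that \<open>p \<in> H\<close> assms(1) subspace_neg by blast
qed

definition star_hull :: "'a::real_vector set \<Rightarrow> 'a set" where
  "star_hull F = {t *\<^sub>R Z | t Z. 0 \<le> t \<and> t \<le> 1 \<and> Z \<in> F}"

lemma subset_star_hull: "F \<subseteq> star_hull F"
  unfolding star_hull_def by (force intro: exI[of _ 1])

lemma zero_in_star_hull: "F \<noteq> {} \<Longrightarrow> 0 \<in> star_hull F"
  unfolding star_hull_def by (force intro: exI[of _ 0])

lemma star_hull_subspace: "subspace H \<Longrightarrow> F \<subseteq> H \<Longrightarrow> star_hull F \<subseteq> H"
  unfolding star_hull_def by (auto intro: subspace_scale)

lemma N_set_scale_ge_one:
  assumes "E \<in> N_set F K" "g \<in> star_hull F" "l *\<^sub>R g - E \<in> K"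
  shows "1 \<le> l"
proof -
  obtain s Z where g: "g = s *\<^sub>R Z" and s: "0 \<le> s" "s \<le> 1" and "Z \<in> F"
    using assms(2) unfolding star_hull_def by blast
  have "(l * s) *\<^sub>R Z - E \<in> K"
    using assms(3) by (simp add: g)
  then have "1 \<le> l * s"
    using assms(1) \<open>Z \<in> F\<close> unfolding N_set_def by (metis (mono_tags, lifting) mem_Collect_eq not_le)
  then show ?thesis
    using s by (smt (verit) mult_left_le mult_nonpos_nonneg)
qed

lemma N_set_scale_gt_one:
  assumes "E \<in> N_set F K" "F \<subseteq> herm_set" "g \<in> star_hull F" "l *\<^sub>R g - E \<in> herm_interior K"
  shows "1 < l"
proof -
  have "g \<in> herm_set"
    using assms(2,3) star_hull_subspace[OF subspace_herm_set] by blast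
  moreover have "E \<in> herm_set"
    using assms(1) by (simp add: N_set_def)
  ultimately have "l *\<^sub>R g - E \<in> herm_set" "- g \<in> herm_set"
    using subspace_herm_set by (auto intro: subspace_diff subspace_scale subspace_neg)
  then obtain d where "d > 0" and "(l *\<^sub>R g - E) + d *\<^sub>R (- g) \<in> K"
    using herm_interior_add_scaled[OF assms(4)] by blast
  then have "(l - d) *\<^sub>R g - E \<in> K"
    by (simp add: algebra_simps)
  then have "1 \<le> l - d"
    using N_set_scale_ge_one[OF assms(1,3)] by blast
  then show ?thesis
    using \<open>d > 0\<close> by simp
qed

definition robustness_feasible ::
    "(complex^'n^'n) set \<Rightarrow> (complex^'n^'n) set \<Rightarrow> complex^'n^'n \<Rightarrow> real set" where
  "robustness_feasible F K E =
     {t. t \<ge> 0 \<and> (\<exists>E' \<in> K. (1 / (1 + t)) *\<^sub>R (E + t *\<^sub>R E') \<in> F)}"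

lemma robustness_eq_Inf: "robustness F K E = Inf (robustness_feasible F K E)"
  by (simp add: robustness_def robustness_feasible_def)

lemma bdd_below_robustness_feasible: "bdd_below (robustness_feasible F K E)"
  by (rule bdd_belowI[of _ 0]) (simp add: robustness_feasible_def)

lemma robustness_le: "t \<in> robustness_feasible F K E \<Longrightarrow> robustness F K E \<le> t"
  unfolding robustness_eq_Inf using bdd_below_robustness_feasible by (rule cInf_lower[rotated])

lemma robustness_nonneg: "robustness_feasible F K E \<noteq> {} \<Longrightarrow> 0 \<le> robustness F K E"
  unfolding robustness_eq_Inf by (rule cInf_greatest) (auto simp: robustness_feasible_def)

lemma robustness_feasibleI:
  assumes "cone K" "t > 0" "Z \<in> F" "(1 + t) *\<^sub>R Z - E \<in> K"
  shows "t \<in> robustness_feasible F K E"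
proof -
  define E' where "E' = (1 / t) *\<^sub>R ((1 + t) *\<^sub>R Z - E)"
  have "E' \<in> K"
    using assms(1,2,4) unfolding E'_def cone_def by simp
  moreover have "(1 / (1 + t)) *\<^sub>R (E + t *\<^sub>R E') = Z"
    using assms(2) by (simp add: E'_def)
  ultimately show ?thesis
    using assms(2,3) unfolding robustness_feasible_def by auto
qed

lemma robustness_feasible_nonempty:
  assumes "cone K" "E \<in> herm_set" "Z \<in> F" "Z \<in> herm_interior K" "Z \<in> herm_set"
  shows "robustness_feasible F K E \<noteq> {}"
proof -
  have "Z - E \<in> herm_set"
    using assms(2,5) subspace_herm_set by (rule_tac subspace_diff) auto
  then obtain d where "d > 0" and "Z + d *\<^sub>R (Z - E) \<in> K"
    using herm_interior_add_scaled[OF assms(4,5)] by blast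
  then have "(1 / d) *\<^sub>R (Z + d *\<^sub>R (Z - E)) \<in> K"
    using assms(1) unfolding cone_def by simp
  also have "(1 / d) *\<^sub>R (Z + d *\<^sub>R (Z - E)) = (1 + 1 / d) *\<^sub>R Z - E"
    using \<open>d > 0\<close> by (simp add: algebra_simps)
  finally have "1 / d \<in> robustness_feasible F K E"
    using \<open>d > 0\<close> assms(1,3) by (intro robustness_feasibleI) auto
  then show ?thesis
    by blast
qed

lemma hs_inner_le_robustness:
  assumes "K \<subseteq> herm_set" "F \<subseteq> herm_set" "E \<in> herm_set" "\<phi> \<in> dual_cone K"
    and "bdd_above (hs_inner \<phi> ` F)" "robustness_feasible F K E \<noteq> {}"
  shows "hs_inner \<phi> E \<le> (1 + robustness F K E) * (SUP Z\<in>F. hs_inner \<phi> Z)"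
proof -
  define M where "M = (SUP Z\<in>F. hs_inner \<phi> Z)"
  have closed: "closed {t. hs_inner \<phi> E \<le> (1 + t) * M}"
    by (intro closed_Collect_le continuous_intros)
  have "robustness_feasible F K E \<subseteq> {t. hs_inner \<phi> E \<le> (1 + t) * M}"
  proof
    fix t assume "t \<in> robustness_feasible F K E"
    then obtain E' where "t \<ge> 0" "E' \<in> K" and Z: "(1 / (1 + t)) *\<^sub>R (E + t *\<^sub>R E') \<in> F"
      unfolding robustness_feasible_def by blast
    define Z where "Z = (1 / (1 + t)) *\<^sub>R (E + t *\<^sub>R E')"
    have "E = (1 + t) *\<^sub>R Z - t *\<^sub>R E'"
      using \<open>t \<ge> 0\<close> by (simp add: Z_def)
    then have "hs_inner \<phi> E = (1 + t) * (\<phi> \<bullet> Z) - t * (\<phi> \<bullet> E')"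
      using assms(3) by (simp add: hs_inner_eq_inner inner_diff_right)
    also have "\<dots> \<le> (1 + t) * (\<phi> \<bullet> Z)"
      using assms(1,4) \<open>t \<ge> 0\<close> \<open>E' \<in> K\<close> by (auto simp: dual_cone_def hs_inner_eq_inner subsetD)
    also have "\<phi> \<bullet> Z \<le> M"
      using Z assms(2,5) unfolding M_def Z_def by (metis cSUP_upper hs_inner_eq_inner subsetD)
    then have "(1 + t) * (\<phi> \<bullet> Z) \<le> (1 + t) * M"
      using \<open>t \<ge> 0\<close> by (simp add: mult_left_mono)
    finally show "t \<in> {t. hs_inner \<phi> E \<le> (1 + t) * M}"
      by simp
  qed
  from closed_subset_contains_Inf[OF closed this assms(6) bdd_below_robustness_feasible]
  have "Inf (robustness_feasible F K E) \<in> {t. hs_inner \<phi> E \<le> (1 + t) * M}" .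
  then show ?thesis
    by (simp add: M_def robustness_eq_Inf)
qed

locale robustness_setting =
  fixes K F :: "(complex^'n^'n) set" and E :: "complex^'n^'n"
  assumes K_herm: "K \<subseteq> herm_set" and K_cone: "cone K" and K_convex: "convex K"
    and F_herm: "F \<subseteq> herm_set" and F_bounded: "bounded F"
    and star_hull_convex: "convex (star_hull F)"
    and F_meets_herm_interior: "F \<inter> herm_interior K \<noteq> {}"
    and E_in_N: "E \<in> N_set F K"
begin

lemma E_herm: "E \<in> herm_set"
  using E_in_N by (simp add: N_set_def)

lemma zero_in_K: "0 \<in> K"
  using F_meets_herm_interior herm_interior_subset cone_contains_0[OF K_cone] by blast

lemma feasible_nonempty: "robustness_feasible F K E \<noteq> {}"
  using F_meets_herm_interior K_herm herm_interior_subset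
    robustness_feasible_nonempty[OF K_cone E_herm] by blast

lemma bdd_above_hs_inner: "bdd_above (hs_inner \<phi> ` F)"
proof -
  obtain B where B: "\<And>Z. Z \<in> F \<Longrightarrow> norm Z \<le> B"
    using F_bounded unfolding bounded_iff by blast
  have "hs_inner \<phi> Z \<le> norm \<phi> * B" if "Z \<in> F" for Z
  proof -
    have "hs_inner \<phi> Z = \<phi> \<bullet> Z"
      using F_herm that by (simp add: hs_inner_eq_inner subsetD)
    also have "\<dots> \<le> norm \<phi> * norm Z"
      by (rule norm_cauchy_schwarz)
    also have "\<dots> \<le> norm \<phi> * B"
      using B[OF that] by (simp add: mult_left_mono)
    finally show ?thesis .
  qed
  then show ?thesis
    by (rule bdd_aboveI2)
qed

lemma SUP_hs_inner_pos:
  assumes "\<phi> \<in> dual_cone K" "\<phi> \<noteq> 0"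
  shows "0 < (SUP Z\<in>F. hs_inner \<phi> Z)"
proof -
  obtain Z0 where "Z0 \<in> F" "Z0 \<in> herm_interior K"
    using F_meets_herm_interior by blast
  then have "0 < hs_inner \<phi> Z0"
    using dual_cone_inner_pos[OF K_herm assms] by blast
  also have "\<dots> \<le> (SUP Z\<in>F. hs_inner \<phi> Z)"
    by (rule cSUP_upper[OF \<open>Z0 \<in> F\<close> bdd_above_hs_inner])
  finally show ?thesis .
qed

lemma ratio_le_robustness:
  assumes "\<phi> \<in> dual_cone K" "\<phi> \<noteq> 0"
  shows "hs_inner \<phi> E / (SUP Z\<in>F. hs_inner \<phi> Z) \<le> 1 + robustness F K E"
  using hs_inner_le_robustness[OF K_herm F_herm E_herm assms(1) bdd_above_hs_inner feasible_nonempty]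
    SUP_hs_inner_pos[OF assms] by (simp add: pos_divide_le_eq)

lemma ratio_lower_bound:
  assumes "\<phi> \<in> dual_cone K" "\<phi> \<noteq> 0" "c > 0"
    and "\<And>Z. Z \<in> F \<Longrightarrow> c * hs_inner \<phi> Z \<le> hs_inner \<phi> E"
  shows "c \<le> hs_inner \<phi> E / (SUP Z\<in>F. hs_inner \<phi> Z)"
proof -
  have "F \<noteq> {}"
    using F_meets_herm_interior by blast
  then have "(SUP Z\<in>F. hs_inner \<phi> Z) \<le> hs_inner \<phi> E / c"
    using assms(3,4) by (intro cSUP_least) (auto simp: pos_le_divide_eq mult.commute)
  then show ?thesis
    using SUP_hs_inner_pos[OF assms(1,2)] assms(3) by (simp add: field_simps)
qed

lemma robustness_le_of_dominated:
  assumes "g \<in> star_hull F" "l *\<^sub>R g - E \<in> K"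
  shows "robustness F K E \<le> l - 1"
proof -
  obtain Z0 where "Z0 \<in> F" "Z0 \<in> herm_interior K"
    using F_meets_herm_interior by blast
  have "1 \<le> l"
    using N_set_scale_ge_one[OF E_in_N assms] .
  have "\<mu> * (1 + robustness F K E) \<le> l" if "0 < \<mu>" "\<mu> < 1" for \<mu>
  proof -
    define W where "W = \<mu> *\<^sub>R g + (1 - \<mu>) *\<^sub>R Z0"
    have "W \<in> star_hull F"
      unfolding W_def using star_hull_convex assms(1) subset_star_hull \<open>Z0 \<in> F\<close> that
      by (intro convexD) auto
    then obtain s Z where W: "W = s *\<^sub>R Z" and s: "0 \<le> s" "s \<le> 1" and "Z \<in> F"
      unfolding star_hull_def by blast
    define c where "c = l * s / \<mu>"
    have "c *\<^sub>R Z - E = (l *\<^sub>R g - E) + (l * (1 - \<mu>) / \<mu>) *\<^sub>R Z0"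
    proof -
      have "c *\<^sub>R Z = (l / \<mu>) *\<^sub>R W"
        by (simp add: c_def W)
      also have "\<dots> = l *\<^sub>R g + (l * (1 - \<mu>) / \<mu>) *\<^sub>R Z0"
        using \<open>0 < \<mu>\<close> by (simp add: W_def scaleR_add_right)
      finally show ?thesis
        by (simp add: algebra_simps)
    qed
    also have "\<dots> \<in> herm_interior K"
      using \<open>1 \<le> l\<close> that
      by (intro herm_interior_add K_herm K_cone K_convex assms(2) \<open>Z0 \<in> herm_interior K\<close>) simp
    finally have int: "c *\<^sub>R Z - E \<in> herm_interior K" .
    have "1 < c"
      using N_set_scale_gt_one[OF E_in_N F_herm subset_star_hull[THEN subsetD, OF \<open>Z \<in> F\<close>] int] .
    then have "c - 1 \<in> robustness_feasible F K E"
      using int herm_interior_subset \<open>Z \<in> F\<close> by (intro robustness_feasibleI K_cone) auto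
    then have "robustness F K E \<le> c - 1"
      by (rule robustness_le)
    then have "\<mu> * (1 + robustness F K E) \<le> \<mu> * c"
      using \<open>0 < \<mu>\<close> by simp
    also have "\<mu> * c \<le> l"
      using s \<open>1 \<le> l\<close> \<open>0 < \<mu>\<close> by (simp add: c_def mult_left_le)
    finally show ?thesis .
  qed
  then have "1 + robustness F K E \<le> l"
    by (rule field_le_mult_one_interval)
  then show ?thesis
    by simp
qed

definition dominated :: "(complex^'n^'n) set" where
  "dominated = {(1 + robustness F K E) *\<^sub>R g - k | g k. g \<in> star_hull F \<and> k \<in> K}"

lemma dominatedI: "g \<in> star_hull F \<Longrightarrow> k \<in> K \<Longrightarrow> (1 + robustness F K E) *\<^sub>R g - k \<in> dominated"
  unfolding dominated_def by blast

lemma convex_dominated: "convex dominated"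
proof -
  have "dominated = (\<Union>x \<in> (\<lambda>g. (1 + robustness F K E) *\<^sub>R g) ` star_hull F. \<Union>k\<in>K. {x - k})"
    unfolding dominated_def by blast
  then show ?thesis
    using convex_differences[OF convex_scaling[OF star_hull_convex] K_convex] by simp
qed

lemma dominated_herm: "dominated \<subseteq> herm_set"
  unfolding dominated_def
  using star_hull_subspace[OF subspace_herm_set F_herm] K_herm subspace_herm_set
  by (auto intro: subspace_diff subspace_scale)

lemma zero_in_dominated: "0 \<in> dominated"
  using dominatedI[OF zero_in_star_hull zero_in_K] F_meets_herm_interior by auto

lemma E_in_closure_dominated: "E \<in> closure dominated"
proof -
  let ?T = "robustness_feasible F K E"
  define \<rho> where "\<rho> = 1 + robustness F K E"
  have "\<rho> > 0"
    using robustness_nonneg[OF feasible_nonempty] by (simp add: \<rho>_def)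
  define f where "f t = (\<rho> / (1 + t)) *\<^sub>R E" for t :: real
  have img: "f ` ?T \<subseteq> dominated"
  proof
    fix y assume "y \<in> f ` ?T"
    then obtain t E' where y: "y = f t" and "t \<ge> 0" "E' \<in> K"
      and Z: "(1 / (1 + t)) *\<^sub>R (E + t *\<^sub>R E') \<in> F"
      unfolding robustness_feasible_def by blast
    have "y = \<rho> *\<^sub>R ((1 / (1 + t)) *\<^sub>R (E + t *\<^sub>R E')) - (\<rho> * t / (1 + t)) *\<^sub>R E'"
      by (simp add: y f_def scaleR_add_right)
    moreover have "(\<rho> * t / (1 + t)) *\<^sub>R E' \<in> K"
      using K_cone \<open>E' \<in> K\<close> \<open>t \<ge> 0\<close> \<open>\<rho> > 0\<close> unfolding cone_def by simp
    ultimately show "y \<in> dominated"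
      using dominatedI subset_star_hull Z unfolding \<rho>_def by blast
  qed
  have "closure ?T \<subseteq> {0..}"
    by (rule closure_minimal) (auto simp: robustness_feasible_def)
  then have "continuous_on (closure ?T) f"
    unfolding f_def by (intro continuous_intros) auto
  from image_closure_subset[OF this closed_closure] img closure_subset
  have "f ` closure ?T \<subseteq> closure dominated"
    by blast
  moreover have "robustness F K E \<in> closure ?T"
    unfolding robustness_eq_Inf
    by (rule closure_contains_Inf[OF feasible_nonempty bdd_below_robustness_feasible])
  moreover have "f (robustness F K E) = E"
    using \<open>\<rho> > 0\<close> by (simp add: f_def \<rho>_def)
  ultimately show ?thesis
    by (metis image_eqI subsetD)
qed

lemma E_notin_rel_interior_dominated: "E \<notin> rel_interior dominated"
proof
  define \<rho> where "\<rho> = 1 + robustness F K E"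
  assume "E \<in> rel_interior dominated"
  from convex_rel_interior_if2[OF convex_dominated this] hull_inc[OF zero_in_dominated]
  obtain \<mu> where "\<mu> > 1" and "\<mu> *\<^sub>R E \<in> dominated"
    by fastforce
  then obtain g k where "g \<in> star_hull F" "k \<in> K" and eq: "\<mu> *\<^sub>R E = \<rho> *\<^sub>R g - k"
    unfolding dominated_def \<rho>_def by blast
  have "(\<rho> / \<mu>) *\<^sub>R g - E = (1 / \<mu>) *\<^sub>R (\<rho> *\<^sub>R g - \<mu> *\<^sub>R E)"
    using \<open>\<mu> > 1\<close> by (simp add: scaleR_diff_right)
  also have "\<dots> = (1 / \<mu>) *\<^sub>R k"
    by (simp add: eq)
  also have "\<dots> \<in> K"
    using K_cone \<open>k \<in> K\<close> \<open>\<mu> > 1\<close> unfolding cone_def by simp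
  finally have "robustness F K E \<le> \<rho> / \<mu> - 1"
    using robustness_le_of_dominated \<open>g \<in> star_hull F\<close> by blast
  moreover have "\<rho> / \<mu> < \<rho>"
    using \<open>\<mu> > 1\<close> robustness_nonneg[OF feasible_nonempty] by (simp add: \<rho>_def divide_less_eq)
  ultimately show False
    unfolding \<rho>_def by linarith
qed

lemma supporting_functional_exists:
  obtains \<phi> where "\<phi> \<in> dual_cone K" "\<phi> \<noteq> 0"
    "\<And>Z. Z \<in> F \<Longrightarrow> (1 + robustness F K E) * hs_inner \<phi> Z \<le> hs_inner \<phi> E"
proof -
  obtain \<phi> where "\<phi> \<in> herm_set" "\<phi> \<noteq> 0" and supp: "\<And>y. y \<in> dominated \<Longrightarrow> \<phi> \<bullet> y \<le> \<phi> \<bullet> E"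
    using supporting_functional_in_subspace[OF subspace_herm_set dominated_herm convex_dominated]
      zero_in_dominated E_in_closure_dominated E_notin_rel_interior_dominated by blast
  have "0 \<le> \<phi> \<bullet> k" if "k \<in> K" for k
  proof (rule ccontr)
    assume "\<not> 0 \<le> \<phi> \<bullet> k"
    define c where "c = (\<bar>\<phi> \<bullet> E\<bar> + 1) / - (\<phi> \<bullet> k)"
    have "c \<ge> 0"
      using \<open>\<not> 0 \<le> \<phi> \<bullet> k\<close> unfolding c_def by (intro divide_nonneg_pos) auto
    then have "(1 + robustness F K E) *\<^sub>R 0 - c *\<^sub>R k \<in> dominated"
      using dominatedI zero_in_star_hull F_meets_herm_interior K_cone \<open>k \<in> K\<close>
      unfolding cone_def by blast
    then have "- (c * (\<phi> \<bullet> k)) \<le> \<phi> \<bullet> E"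
      using supp by fastforce
    moreover have "c * (\<phi> \<bullet> k) = - (\<bar>\<phi> \<bullet> E\<bar> + 1)"
      using \<open>\<not> 0 \<le> \<phi> \<bullet> k\<close> by (simp add: c_def)
    ultimately show False
      by linarith
  qed
  then have "\<phi> \<in> dual_cone K"
    using \<open>\<phi> \<in> herm_set\<close> K_herm by (auto simp: dual_cone_def hs_inner_eq_inner subsetD)
  moreover have "(1 + robustness F K E) * hs_inner \<phi> Z \<le> hs_inner \<phi> E" if "Z \<in> F" for Z
    using supp[OF dominatedI[OF subset_star_hull[THEN subsetD, OF that] zero_in_K]]
      that F_herm E_herm by (simp add: hs_inner_eq_inner subsetD)
  ultimately show thesis
    using that \<open>\<phi> \<noteq> 0\<close> by blast
qed

lemma robustness_attained:
  assumes "{t *\<^sub>R \<phi> | t \<phi>. t \<ge> 0 \<and> \<phi> \<in> X} = dual_cone K"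
  obtains \<psi> where "\<psi> \<in> X" "\<psi> \<noteq> 0"
    "hs_inner \<psi> E / (SUP Z\<in>F. hs_inner \<psi> Z) = 1 + robustness F K E"
proof -
  obtain \<phi> where "\<phi> \<in> dual_cone K" "\<phi> \<noteq> 0"
    and \<phi>_F: "\<And>Z. Z \<in> F \<Longrightarrow> (1 + robustness F K E) * hs_inner \<phi> Z \<le> hs_inner \<phi> E"
    using supporting_functional_exists by metis
  then obtain c \<psi> where "c \<ge> 0" "\<psi> \<in> X" and \<phi>: "\<phi> = c *\<^sub>R \<psi>"
    using assms by blast
  then have "c > 0" "\<psi> \<noteq> 0"
    using \<open>\<phi> \<noteq> 0\<close> by auto
  have "\<psi> \<in> dual_cone K"
    using assms \<open>\<psi> \<in> X\<close> by (force intro: exI[of _ 1])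
  have "(1 + robustness F K E) * hs_inner \<psi> Z \<le> hs_inner \<psi> E" if "Z \<in> F" for Z
  proof -
    have "c * ((1 + robustness F K E) * hs_inner \<psi> Z) \<le> c * hs_inner \<psi> E"
      using \<phi>_F[OF that] F_herm E_herm that
      by (simp add: \<phi> hs_inner_eq_inner subsetD mult.left_commute)
    then show ?thesis
      using \<open>c > 0\<close> by simp
  qed
  then have "1 + robustness F K E \<le> hs_inner \<psi> E / (SUP Z\<in>F. hs_inner \<psi> Z)"
    using \<open>\<psi> \<in> dual_cone K\<close> \<open>\<psi> \<noteq> 0\<close> robustness_nonneg[OF feasible_nonempty]
    by (intro ratio_lower_bound) auto
  with ratio_le_robustness[OF \<open>\<psi> \<in> dual_cone K\<close> \<open>\<psi> \<noteq> 0\<close>] show thesis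
    using that \<open>\<psi> \<in> X\<close> \<open>\<psi> \<noteq> 0\<close> by simp
qed

end

theorem lemma4:
  fixes K F X :: "(complex^'n^'n) set" and E :: "complex^'n^'n"
  assumes K: "proper_cone K"
    and F_H: "F \<subseteq> herm_set" and F_compact: "compact F"
    and F_conv: "convex {t *\<^sub>R Z | t Z. 0 \<le> t \<and> t \<le> 1 \<and> Z \<in> F}"
    and F_int: "F \<inter> herm_interior K \<noteq> {}"
    and X_H: "X \<subseteq> herm_set"
    and X_gen: "{t *\<^sub>R \<phi> | t \<phi>. t \<ge> 0 \<and> \<phi> \<in> X} = dual_cone K"
    and E: "E \<in> N_set F K"
  shows "(\<exists>\<phi> \<in> X - {0}. hs_inner \<phi> E / (SUP Z\<in>F. hs_inner \<phi> Z) = 1 + robustness F K E)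
       \<and> (\<forall>\<phi> \<in> X - {0}. hs_inner \<phi> E / (SUP Z\<in>F. hs_inner \<phi> Z) \<le> 1 + robustness F K E)"
proof -
  interpret robustness_setting K F E
    using K F_H F_compact F_conv F_int E
    by unfold_locales (auto simp: proper_cone_def star_hull_def compact_imp_bounded)
  have "X \<subseteq> dual_cone K"
    using X_gen by (force intro: exI[of _ 1])
  then show ?thesis
    using robustness_attained[OF X_gen] ratio_le_robustness by blast
qed

end
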